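(* Let $\mathbf X=(X_1,\dots,X_d)$ be a random vector taking values in $\mathbb N^d$, let $\mathsf A=(a_{ij}) \in [0,1]^{c\times d}$ be a matrix whose columns $\mathbf a_j=(a_{1j},\dots,a_{cj})$ satisfy $|\mathbf a_j|=\sum_{i=1}^c a_{ij} \leq 1$, and let $\mathbf Y = \mathsf A \circ \mathbf X$ be the multinomial re-marking of $\mathbf X$ with parameters $\mathsf A$. Then: 1. $\mathbb E \mathbf Y = \mathsf A\, \mathbb E \mathbf X$; 2. $\mathsf{Disp}(\mathbf Y) = \mathsf A \,\mathsf{Disp}(\mathbf X)\, \mathsf A^\top$; 3. $\Phi_{\mathbf Y}(\mathbf t) = \Phi_{\mathbf X}(\mathsf A^\top \mathbf t)$.
   Context: Multinomial re-marking: given $\mathbf X$, let $\mathbf Z^{(1)},\dots,\mathbf Z^{(d)}$ be conditionally independent given $\mathbf X$ with $\mathbf Z^{(j)}\sim\operatorname{Multi}(X_j,\mathbf a_j)$ (each of the $X_j$ items is independently given new colour $i\in\{1,\dots,c\}$ with probability $a_{ij}$ or discarded with probability $1-|\mathbf a_j|$, and $Z^{(j)}_i$ counts those given colour $i$); then $\mathbf Y=\mathsf A\circ\mathbf X:=\sum_{j=1}^d\mathbf Z^{(j)}$. Dispersion–covariance matrix $\mathsf{Disp}(\mathbf X)$: diagonal entries $\operatorname{Disp}(X_i)=\operatorname{Var}(X_i)-\mathbb E X_i$, off-diagonal entries $\operatorname{Cov}(X_i,X_j)$. Multivariate factorial moment generating function: $\Phi_{\mathbf X}(\mathbf s)=\mathbb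 E\prod_{j}(1+s_j)^{X_j}$. The moments appearing are assumed to exist. *)

theory Defs
  imports "HOL-Probability.Probability"
begin

text \<open>Random vectors in N^d are pmfs on functions 'd => nat, with 'd a finite index type
  (d = CARD('d)); colours are a finite type 'c (c = CARD('c)).
  A matrix A in [0,1]^(c x d) is a function 'c => 'd => real, A i j = a_ij.\<close>

text \<open>Colour of a single item: Some i with probability a i, None (discarded) with
  probability 1 - |a|.\<close>
definition colour_pmf :: "('c::finite \<Rightarrow> real) \<Rightarrow> 'c option pmf" where
  "colour_pmf a = embed_pmf (\<lambda>oc. case oc of None \<Rightarrow> 1 - sum a UNIV | Some i \<Rightarrow> a i)"

text \<open>Multi(n, a): each of n items independently coloured, counts per colour.\<close>
primrec multi_pmf :: "nat \<Rightarrow> ('c::finite \<Rightarrow> real) \<Rightarrow> ('c \<Rightarrow> nat) pmf" where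
  "multi_pmf 0 a = return_pmf (\<lambda>_. 0)"
| "multi_pmf (Suc n) a = bind_pmf (multi_pmf n a)
      (\<lambda>z. map_pmf (\<lambda>oc. case oc of None \<Rightarrow> z | Some i \<Rightarrow> z(i := z i + 1)) (colour_pmf a))"

definition remark_pmf :: "('c::finite \<Rightarrow> 'd::finite \<Rightarrow> real) \<Rightarrow> ('d \<Rightarrow> nat) pmf \<Rightarrow> ('c \<Rightarrow> nat) pmf" where
  "remark_pmf A X = bind_pmf X (\<lambda>x.
      map_pmf (\<lambda>Z i. \<Sum>j\<in>UNIV. Z j i)
        (Pi_pmf UNIV (\<lambda>_. 0) (\<lambda>j. multi_pmf (x j) (\<lambda>i. A i j))))"

definition mean_pmf :: "('d \<Rightarrow> nat) pmf \<Rightarrow> 'd \<Rightarrow> real" where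
  "mean_pmf X j = measure_pmf.expectation X (\<lambda>x. real (x j))"

definition cov_pmf :: "('d \<Rightarrow> nat) pmf \<Rightarrow> 'd \<Rightarrow> 'd \<Rightarrow> real" where
  "cov_pmf X j l = measure_pmf.expectation X
     (\<lambda>x. (real (x j) - mean_pmf X j) * (real (x l) - mean_pmf X l))"

definition disp_pmf :: "('d \<Rightarrow> nat) pmf \<Rightarrow> 'd \<Rightarrow> 'd \<Rightarrow> real" where
  "disp_pmf X j l = (if j = l then cov_pmf X j j - mean_pmf X j else cov_pmf X j l)"

definition fmgf_pmf :: "('d::finite \<Rightarrow> nat) pmf \<Rightarrow> ('d \<Rightarrow> real) \<Rightarrow> real" where
  "fmgf_pmf X s = measure_pmf.expectation X (\<lambda>x. \<Prod>j\<in>UNIV. (1 + s j) ^ (x j))"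

end

theory Submission
  imports Defs
begin

(* Conditionally on X = x, the re-marking Y is the column sum of independent multinomial
  vectors Z^(j) ~ Multi(x_j, a_j), so by the tower property each moment of Y is the X-average
  of the corresponding conditional moment. Induction on the number of items gives the
  multinomial moments E Z_i = n a_i, E (Z_i Z_k - [i = k] Z_i) = n (n - 1) a_i a_k and
  E prod_i (1 + t_i)^Z_i = (1 + a.t)^n. By independence of the Z^(j), the conditional second
  factorial moments of Y are sum_jl a_ij (x_j x_l - [j = l] x_j) a_kl and the conditional
  factorial generating function is prod_j (1 + (A^T t)_j)^x_j. Finally
  Disp = (second factorial moments) - (E X)(E X)^T, and both terms transform as M |-> A M A^T. *)

lemma
  fixes g :: "'b \<Rightarrow> real"
  assumes nonneg: "\<And>y. 0 \<le> g y"
  shows integrable_bind_pmf_nonneg_iff: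
      "integrable (bind_pmf M N) g \<longleftrightarrow>
         (\<forall>x\<in>set_pmf M. integrable (N x) g) \<and> integrable M (\<lambda>x. measure_pmf.expectation (N x) g)"
    and integral_bind_pmf_nonneg:
      "integrable (bind_pmf M N) g \<Longrightarrow> measure_pmf.expectation (bind_pmf M N) g =
         measure_pmf.expectation M (\<lambda>x. measure_pmf.expectation (N x) g)"
proof -
  have nn_integral_eq: "(\<integral>\<^sup>+x. ennreal (measure_pmf.expectation (N x) g) \<partial>M) = (\<integral>\<^sup>+x. \<integral>\<^sup>+y. g y \<partial>N x \<partial>M)"
    if "\<forall>x\<in>set_pmf M. integrable (N x) g"
    using that by (intro nn_integral_cong_AE AE_pmfI nn_integral_eq_integral[symmetric]) (auto simp: nonneg)
  have iff_finite: "integrable (measure_pmf P) h \<longleftrightarrow> (\<integral>\<^sup>+y. h y \<partial>P) < \<infinity>"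
    if "\<And>y. 0 \<le> h y" for P and h :: "_ \<Rightarrow> real"
    using that by (auto intro: integrableI_nonneg simp: integrable_iff_bounded)
  show iff: "integrable (bind_pmf M N) g \<longleftrightarrow>
      (\<forall>x\<in>set_pmf M. integrable (N x) g) \<and> integrable M (\<lambda>x. measure_pmf.expectation (N x) g)"
  proof
    assume "integrable (bind_pmf M N) g"
    then have finite: "(\<integral>\<^sup>+x. \<integral>\<^sup>+y. g y \<partial>N x \<partial>M) < \<infinity>"
      using nonneg by (simp add: iff_finite)
    then have "AE x in M. (\<integral>\<^sup>+y. g y \<partial>N x) \<noteq> \<infinity>"
      by (intro nn_integral_PInf_AE) auto
    then have inner: "\<forall>x\<in>set_pmf M. integrable (N x) g"
      using nonneg by (auto simp: AE_measure_pmf_iff iff_finite top.not_eq_extremum)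
    moreover have "integrable M (\<lambda>x. measure_pmf.expectation (N x) g)"
      using finite nonneg by (intro integrableI_nonneg) (auto simp: nn_integral_eq[OF inner] integral_nonneg)
    ultimately show "(\<forall>x\<in>set_pmf M. integrable (N x) g) \<and> integrable M (\<lambda>x. measure_pmf.expectation (N x) g)" ..
  next
    assume "(\<forall>x\<in>set_pmf M. integrable (N x) g) \<and> integrable M (\<lambda>x. measure_pmf.expectation (N x) g)"
    then show "integrable (bind_pmf M N) g"
      using nonneg iff_finite[of "\<lambda>x. measure_pmf.expectation (N x) g" M]
      by (simp add: iff_finite nn_integral_eq[symmetric] integral_nonneg)
  qed
  show "measure_pmf.expectation (bind_pmf M N) g =
      measure_pmf.expectation M (\<lambda>x. measure_pmf.expectation (N x) g)"
    if integrable: "integrable (bind_pmf M N) g"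
  proof -
    have inner: "\<forall>x\<in>set_pmf M. integrable (N x) g"
      and outer: "integrable M (\<lambda>x. measure_pmf.expectation (N x) g)"
      using integrable iff by auto
    have "ennreal (measure_pmf.expectation (bind_pmf M N) g) = (\<integral>\<^sup>+x. \<integral>\<^sup>+y. g y \<partial>N x \<partial>M)"
      using integrable nonneg by (simp add: nn_integral_eq_integral[symmetric])
    also have "\<dots> = ennreal (measure_pmf.expectation M (\<lambda>x. measure_pmf.expectation (N x) g))"
      using outer nonneg
      by (simp add: nn_integral_eq[OF inner, symmetric] nn_integral_eq_integral integral_nonneg)
    finally show ?thesis
      using nonneg by (simp add: integral_nonneg)
  qed
qed

lemma integral_bind_pmf_integrable:
  fixes f :: "'b \<Rightarrow> real"
  assumes integrable: "integrable (bind_pmf M N) f"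
  shows "measure_pmf.expectation (bind_pmf M N) f =
    measure_pmf.expectation M (\<lambda>x. measure_pmf.expectation (N x) f)"
proof -
  define pos where "pos = (\<lambda>y. max 0 (f y))"
  define neg where "neg = (\<lambda>y. max 0 (- f y))"
  have f_eq: "measure_pmf.expectation P f = measure_pmf.expectation P pos - measure_pmf.expectation P neg"
    if "integrable (measure_pmf P) pos" "integrable (measure_pmf P) neg" for P
  proof -
    have "f = (\<lambda>y. pos y - neg y)"
      by (auto simp: pos_def neg_def)
    then show ?thesis
      using that by simp
  qed
  have nonneg: "0 \<le> pos y" "0 \<le> neg y" for y
    by (auto simp: pos_def neg_def)
  have "integrable (bind_pmf M N) pos" "integrable (bind_pmf M N) neg"
    using integrable by (auto simp: pos_def neg_def)
  note pos = this(1)[unfolded integrable_bind_pmf_nonneg_iff[of pos, OF nonneg(1)]]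
   and neg = this(2)[unfolded integrable_bind_pmf_nonneg_iff[of neg, OF nonneg(2)]]
  have "measure_pmf.expectation (bind_pmf M N) f =
      measure_pmf.expectation (bind_pmf M N) pos - measure_pmf.expectation (bind_pmf M N) neg"
    using \<open>integrable (bind_pmf M N) pos\<close> \<open>integrable (bind_pmf M N) neg\<close> by (rule f_eq)
  also have "\<dots> = measure_pmf.expectation M (\<lambda>x. measure_pmf.expectation (N x) pos)
      - measure_pmf.expectation M (\<lambda>x. measure_pmf.expectation (N x) neg)"
    using \<open>integrable (bind_pmf M N) pos\<close> \<open>integrable (bind_pmf M N) neg\<close>
    by (simp add: integral_bind_pmf_nonneg nonneg)
  also have "\<dots> = measure_pmf.expectation M
      (\<lambda>x. measure_pmf.expectation (N x) pos - measure_pmf.expectation (N x) neg)"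
    using pos neg by simp
  also have "\<dots> = measure_pmf.expectation M (\<lambda>x. measure_pmf.expectation (N x) f)"
    using pos neg by (intro integral_cong_AE AE_pmfI) (auto simp: f_eq)
  finally show ?thesis .
qed

lemma expectation_Pi_pmf_component:
  fixes f :: "'b \<Rightarrow> real"
  assumes "finite I" "i \<in> I"
  shows "measure_pmf.expectation (Pi_pmf I d p) (\<lambda>y. f (y i)) = measure_pmf.expectation (p i) f"
    and "integrable (measure_pmf (Pi_pmf I d p)) (\<lambda>y. f (y i)) \<longleftrightarrow> integrable (measure_pmf (p i)) f"
proof -
  have component: "p i = map_pmf (\<lambda>y. y i) (Pi_pmf I d p)"
    using assms by (simp add: Pi_pmf_component)
  show "measure_pmf.expectation (Pi_pmf I d p) (\<lambda>y. f (y i)) = measure_pmf.expectation (p i) f"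
    and "integrable (measure_pmf (Pi_pmf I d p)) (\<lambda>y. f (y i)) \<longleftrightarrow> integrable (measure_pmf (p i)) f"
    by (simp_all add: component)
qed

lemma expectation_prod_Pi_pmf_integrable:
  fixes f :: "'a \<Rightarrow> 'b \<Rightarrow> real"
  assumes fin: "finite I" and "J \<subseteq> I"
    and integrable: "\<And>i. i \<in> J \<Longrightarrow> integrable (measure_pmf (p i)) (f i)"
  shows "measure_pmf.expectation (Pi_pmf I d p) (\<lambda>y. \<Prod>i\<in>J. f i (y i)) =
    (\<Prod>i\<in>J. measure_pmf.expectation (p i) (f i))"
proof -
  have "prob_space.indep_vars (measure_pmf (Pi_pmf I d p)) (\<lambda>_. borel) (\<lambda>i y. f i (y i)) J"
    by (rule prob_space.indep_vars_compose2[OF measure_pmf.prob_space_axioms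
          prob_space.indep_vars_subset[OF measure_pmf.prob_space_axioms indep_vars_Pi_pmf[OF fin] \<open>J \<subseteq> I\<close>]])
       simp
  then have "measure_pmf.expectation (Pi_pmf I d p) (\<lambda>y. \<Prod>i\<in>J. f i (y i)) =
      (\<Prod>i\<in>J. measure_pmf.expectation (Pi_pmf I d p) (\<lambda>y. f i (y i)))"
    using fin \<open>J \<subseteq> I\<close> integrable
    by (intro prob_space.indep_vars_lebesgue_integral measure_pmf.prob_space_axioms)
       (auto simp: expectation_Pi_pmf_component finite_subset)
  also have "\<dots> = (\<Prod>i\<in>J. measure_pmf.expectation (p i) (f i))"
    using fin \<open>J \<subseteq> I\<close> by (intro prod.cong refl) (auto simp: expectation_Pi_pmf_component)
  finally show ?thesis .
qed

lemma integrable_mult_if_square_integrable: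
  fixes f g :: "'a \<Rightarrow> real"
  assumes "integrable M (\<lambda>x. (f x)\<^sup>2)" "integrable M (\<lambda>x. (g x)\<^sup>2)"
    and [measurable]: "f \<in> borel_measurable M" "g \<in> borel_measurable M"
  shows "integrable M (\<lambda>x. f x * g x)"
proof (rule Bochner_Integration.integrable_bound[OF Bochner_Integration.integrable_add[OF assms(1,2)]])
  have "\<bar>f x * g x\<bar> \<le> (f x)\<^sup>2 + (g x)\<^sup>2" for x
  proof -
    have "0 \<le> \<bar>f x\<bar> * \<bar>g x\<bar>" and "2 * \<bar>f x\<bar> * \<bar>g x\<bar> \<le> (f x)\<^sup>2 + (g x)\<^sup>2"
      using sum_squares_bound[of "\<bar>f x\<bar>" "\<bar>g x\<bar>"] by simp_all
    then show ?thesis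
      unfolding abs_mult by linarith
  qed
  then show "AE x in M. norm (f x * g x) \<le> norm ((f x)\<^sup>2 + (g x)\<^sup>2)"
    by simp
qed measurable

definition factorial_moment2_pmf :: "('d \<Rightarrow> nat) pmf \<Rightarrow> 'd \<Rightarrow> 'd \<Rightarrow> real" where
  "factorial_moment2_pmf X j l =
     measure_pmf.expectation X (\<lambda>x. real (x j) * real (x l) - of_bool (j = l) * real (x j))"

lemma
  fixes X :: "('d \<Rightarrow> nat) pmf"
  assumes "\<And>j. integrable (measure_pmf X) (\<lambda>x. (real (x j))\<^sup>2)"
  shows integrable_count_if_square_integrable: "integrable (measure_pmf X) (\<lambda>x. real (x j))"
    and integrable_count_mult_if_square_integrable:
      "integrable (measure_pmf X) (\<lambda>x. real (x j) * real (x l))"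
  using assms
  by (auto intro: measure_pmf.square_integrable_imp_integrable integrable_mult_if_square_integrable)

lemma disp_pmf_eq_factorial_moment2:
  fixes X :: "('d \<Rightarrow> nat) pmf"
  assumes "\<And>j. integrable (measure_pmf X) (\<lambda>x. (real (x j))\<^sup>2)"
  shows "disp_pmf X j l = factorial_moment2_pmf X j l - mean_pmf X j * mean_pmf X l"
proof -
  note integrable = integrable_count_if_square_integrable[OF assms]
    integrable_count_mult_if_square_integrable[OF assms]
  have "cov_pmf X j l = measure_pmf.expectation X (\<lambda>x. real (x j) * real (x l)
      - mean_pmf X l * real (x j) - mean_pmf X j * real (x l) + mean_pmf X j * mean_pmf X l)"
    unfolding cov_pmf_def by (simp add: algebra_simps)
  also have "\<dots> = measure_pmf.expectation X (\<lambda>x. real (x j) * real (x l)) - mean_pmf X j * mean_pmf X l"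
    using integrable by (simp add: mean_pmf_def)
  finally have "cov_pmf X j l =
      measure_pmf.expectation X (\<lambda>x. real (x j) * real (x l)) - mean_pmf X j * mean_pmf X l" .
  then show ?thesis
    using integrable by (cases "j = l") (simp_all add: disp_pmf_def factorial_moment2_pmf_def mean_pmf_def)
qed

lemma finite_set_multi_pmf: "finite (set_pmf (multi_pmf n a))"
  by (induction n) auto

lemma of_nat_fun_upd_Suc: "of_nat ((z(m := z m + 1)) i) = of_nat (z i) + of_bool (m = i)"
  by (simp add: add.commute)

context
  fixes a :: "'c::finite \<Rightarrow> real"
  assumes nonneg: "\<And>i. 0 \<le> a i" and sum_le_1: "sum a UNIV \<le> 1"
begin

lemma pmf_colour_pmf: "pmf (colour_pmf a) c = (case c of None \<Rightarrow> 1 - sum a UNIV | Some i \<Rightarrow> a i)"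
  unfolding colour_pmf_def
proof (rule pmf_embed_pmf)
  show "0 \<le> (case c of None \<Rightarrow> 1 - sum a UNIV | Some i \<Rightarrow> a i)" for c
    using nonneg sum_le_1 by (auto split: option.splits)
  then have "(\<integral>\<^sup>+c. ennreal (case c of None \<Rightarrow> 1 - sum a UNIV | Some i \<Rightarrow> a i) \<partial>count_space UNIV)
      = ennreal (\<Sum>c\<in>UNIV. case c of None \<Rightarrow> 1 - sum a UNIV | Some i \<Rightarrow> a i)"
    by (simp add: nn_integral_count_space_finite sum_ennreal)
  also have "(\<Sum>c\<in>UNIV. case c of None \<Rightarrow> 1 - sum a UNIV | Some i \<Rightarrow> a i) = 1"
    by (simp add: UNIV_option_conv sum.reindex)
  finally show "(\<integral>\<^sup>+c. ennreal (case c of None \<Rightarrow> 1 - sum a UNIV | Some i \<Rightarrow> a i) \<partial>count_space UNIV) = 1"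
    by simp
qed

lemma expectation_colour_pmf:
  "measure_pmf.expectation (colour_pmf a) g = (1 - sum a UNIV) * g None + (\<Sum>i\<in>UNIV. a i * g (Some i))"
proof -
  have "measure_pmf.expectation (colour_pmf a) g = (\<Sum>c\<in>UNIV. g c * pmf (colour_pmf a) c)"
    by (rule integral_measure_pmf_real) auto
  then show ?thesis
    by (simp add: UNIV_option_conv sum.reindex pmf_colour_pmf mult.commute)
qed

lemma expectation_multi_pmf_Suc:
  "measure_pmf.expectation (multi_pmf (Suc n) a) g = measure_pmf.expectation (multi_pmf n a)
     (\<lambda>z. (1 - sum a UNIV) * g z + (\<Sum>m\<in>UNIV. a m * g (z(m := z m + 1))))"
  unfolding multi_pmf.simps
  by (subst integral_bind_pmf_integrable)
     (auto intro!: integrable_measure_pmf_finite finite_set_multi_pmf[of "Suc n", simplified]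
       simp: expectation_colour_pmf)

lemma expectation_multi_pmf_count:
  "measure_pmf.expectation (multi_pmf n a) (\<lambda>z. real (z i)) = real n * a i"
proof (induction n)
  case (Suc n)
  have "(1 - sum a UNIV) * real (z i) + (\<Sum>m\<in>UNIV. a m * real ((z(m := z m + 1)) i)) = real (z i) + a i" for z
    by (simp only: of_nat_fun_upd_Suc) (simp add: ring_distribs sum.distrib sum_distrib_right[symmetric])
  then show ?case
    by (simp only: expectation_multi_pmf_Suc)
       (simp add: integrable_measure_pmf_finite finite_set_multi_pmf Suc algebra_simps)
qed simp

lemma expectation_multi_pmf_factorial_moment2:
  "measure_pmf.expectation (multi_pmf n a) (\<lambda>z. real (z i) * real (z k) - of_bool (i = k) * real (z i)) =
     real n * (real n - 1) * a i * a k"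
proof (induction n)
  case (Suc n)
  define g where "g z = real (z i) * real (z k) - of_bool (i = k) * real (z i)" for z :: "'c \<Rightarrow> nat"
  have "g (z(m := z m + 1)) = g z + of_bool (m = i) * real (z k) + of_bool (m = k) * real (z i)" for z m
    unfolding g_def of_nat_fun_upd_Suc by (auto simp: algebra_simps)
  then have "(1 - sum a UNIV) * g z + (\<Sum>m\<in>UNIV. a m * g (z(m := z m + 1))) =
      g z + a i * real (z k) + a k * real (z i)" for z
    by (simp add: ring_distribs sum.distrib sum_distrib_right[symmetric] mult.assoc[symmetric])
  then show ?case
    using Suc unfolding g_def[symmetric]
    by (simp only: expectation_multi_pmf_Suc)
       (simp add: integrable_measure_pmf_finite finite_set_multi_pmf expectation_multi_pmf_count algebra_simps)
qed simp

lemma expectation_multi_pmf_fmgf: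
  "measure_pmf.expectation (multi_pmf n a) (\<lambda>z. \<Prod>i\<in>UNIV. (1 + t i) ^ z i) = (1 + (\<Sum>i\<in>UNIV. a i * t i)) ^ n"
proof (induction n)
  case (Suc n)
  have "(\<Prod>i\<in>UNIV. (1 + t i) ^ (z(m := z m + 1)) i) = (1 + t m) * (\<Prod>i\<in>UNIV. (1 + t i) ^ z i)" for z m
  proof -
    have "(\<Prod>i\<in>UNIV. (1 + t i) ^ (z(m := z m + 1)) i) = (\<Prod>i\<in>UNIV. (1 + t i) ^ z i * (if i = m then 1 + t i else 1))"
      by (intro prod.cong) auto
    then show ?thesis
      by (simp add: prod.distrib)
  qed
  then have "(1 - sum a UNIV) * (\<Prod>i\<in>UNIV. (1 + t i) ^ z i)
      + (\<Sum>m\<in>UNIV. a m * (\<Prod>i\<in>UNIV. (1 + t i) ^ (z(m := z m + 1)) i))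
      = (1 + (\<Sum>i\<in>UNIV. a i * t i)) * (\<Prod>i\<in>UNIV. (1 + t i) ^ z i)" for z
    by (simp add: ring_distribs sum.distrib sum_distrib_right[symmetric] mult.assoc[symmetric])
  then show ?case
    by (simp only: expectation_multi_pmf_Suc) (simp add: Suc)
qed simp

end

text \<open>The conditional law of (Z^(1), ..., Z^(d)) given X = x: Z j i is the coordinate Z^(j)_i.\<close>
definition remark_counts_pmf ::
    "('c::finite \<Rightarrow> 'd::finite \<Rightarrow> real) \<Rightarrow> ('d \<Rightarrow> nat) \<Rightarrow> ('d \<Rightarrow> 'c \<Rightarrow> nat) pmf" where
  "remark_counts_pmf A x = Pi_pmf UNIV (\<lambda>_. 0) (\<lambda>j. multi_pmf (x j) (\<lambda>i. A i j))"

lemma remark_pmf_eq_bind_counts: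
  "remark_pmf A X = bind_pmf X (\<lambda>x. map_pmf (\<lambda>Z i. \<Sum>j\<in>UNIV. Z j i) (remark_counts_pmf A x))"
  by (simp add: remark_pmf_def remark_counts_pmf_def)

lemma finite_set_remark_counts_pmf: "finite (set_pmf (remark_counts_pmf A x))"
  by (auto simp: remark_counts_pmf_def set_Pi_pmf finite_set_multi_pmf)

lemma integrable_remark_counts_pmf [simp]:
  fixes f :: "_ \<Rightarrow> real"
  shows "integrable (remark_counts_pmf A x) f"
  by (intro integrable_measure_pmf_finite finite_set_remark_counts_pmf)

lemma expectation_remark_counts_pmf_component:
  fixes f :: "('c::finite \<Rightarrow> nat) \<Rightarrow> real"
  shows "measure_pmf.expectation (remark_counts_pmf A x) (\<lambda>Z. f (Z j)) =
    measure_pmf.expectation (multi_pmf (x j) (\<lambda>i. A i j)) f"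
  unfolding remark_counts_pmf_def by (simp add: expectation_Pi_pmf_component)

context
  fixes A :: "'c::finite \<Rightarrow> 'd::finite \<Rightarrow> real"
  assumes A_nonneg: "\<And>i j. 0 \<le> A i j" and A_col: "\<And>j. (\<Sum>i\<in>UNIV. A i j) \<le> 1"
begin

lemma expectation_remark_counts_pmf_total:
  "measure_pmf.expectation (remark_counts_pmf A x) (\<lambda>Z. real (\<Sum>j\<in>UNIV. Z j i)) = (\<Sum>j\<in>UNIV. A i j * real (x j))"
proof -
  have "measure_pmf.expectation (remark_counts_pmf A x) (\<lambda>Z. real (Z j i)) = A i j * real (x j)" for j
    by (simp add: expectation_remark_counts_pmf_component[where f = "\<lambda>z. real (z i)"]
        expectation_multi_pmf_count[of "\<lambda>i. A i j", OF A_nonneg A_col] mult.commute)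
  then show ?thesis
    by simp
qed

lemma expectation_remark_counts_pmf_pair:
  "measure_pmf.expectation (remark_counts_pmf A x)
       (\<lambda>Z. real (Z j i) * real (Z l k) - of_bool (j = l \<and> i = k) * real (Z j i)) =
     A i j * A k l * (real (x j) * real (x l) - of_bool (j = l) * real (x j))"
proof (cases "j = l")
  case True
  have "measure_pmf.expectation (remark_counts_pmf A x)
       (\<lambda>Z. real (Z j i) * real (Z j k) - of_bool (i = k) * real (Z j i)) =
     real (x j) * (real (x j) - 1) * A i j * A k j"
    by (subst expectation_remark_counts_pmf_component)
       (rule expectation_multi_pmf_factorial_moment2[of "\<lambda>i. A i j", OF A_nonneg A_col])
  then show ?thesis
    using True by (simp add: algebra_simps)
next
  case False
  define f where "f m = (\<lambda>z :: 'c \<Rightarrow> nat. real (z (if m = j then i else k)))" for m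
  have "measure_pmf.expectation (remark_counts_pmf A x) (\<lambda>Z. real (Z j i) * real (Z l k)) =
      measure_pmf.expectation (remark_counts_pmf A x) (\<lambda>Z. \<Prod>m\<in>{j, l}. f m (Z m))"
    using False by (simp add: f_def)
  also have "\<dots> = (\<Prod>m\<in>{j, l}. measure_pmf.expectation (multi_pmf (x m) (\<lambda>i. A i m)) (f m))"
    unfolding remark_counts_pmf_def
    by (rule expectation_prod_Pi_pmf_integrable) (auto intro: integrable_measure_pmf_finite finite_set_multi_pmf)
  also have "\<dots> = A i j * A k l * (real (x j) * real (x l))"
    using False by (simp add: f_def expectation_multi_pmf_count[of "\<lambda>i. A i _", OF A_nonneg A_col])
  finally show ?thesis
    using False by simp
qed

lemma expectation_remark_counts_pmf_factorial_moment2: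
  "measure_pmf.expectation (remark_counts_pmf A x)
       (\<lambda>Z. real (\<Sum>j\<in>UNIV. Z j i) * real (\<Sum>j\<in>UNIV. Z j k) - of_bool (i = k) * real (\<Sum>j\<in>UNIV. Z j i)) =
     (\<Sum>j\<in>UNIV. \<Sum>l\<in>UNIV. A i j * (real (x j) * real (x l) - of_bool (j = l) * real (x j)) * A k l)"
proof -
  have "real (\<Sum>j\<in>UNIV. Z j i) * real (\<Sum>j\<in>UNIV. Z j k) - of_bool (i = k) * real (\<Sum>j\<in>UNIV. Z j i) =
      (\<Sum>j\<in>UNIV. \<Sum>l\<in>UNIV. real (Z j i) * real (Z l k) - of_bool (j = l \<and> i = k) * real (Z j i))"
    for Z :: "'d \<Rightarrow> 'c \<Rightarrow> nat"
  proof -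
    have "(\<Sum>l\<in>UNIV. of_bool (j = l \<and> i = k) * real (Z j i)) = of_bool (i = k) * real (Z j i)" for j
      by (cases "i = k") auto
    moreover have "real (\<Sum>j\<in>UNIV. Z j i) * real (\<Sum>j\<in>UNIV. Z j k) =
        (\<Sum>j\<in>UNIV. \<Sum>l\<in>UNIV. real (Z j i) * real (Z l k))"
      by (simp add: sum_product)
    ultimately show ?thesis
      by (simp add: sum_subtractf sum_distrib_left)
  qed
  then have "measure_pmf.expectation (remark_counts_pmf A x)
       (\<lambda>Z. real (\<Sum>j\<in>UNIV. Z j i) * real (\<Sum>j\<in>UNIV. Z j k) - of_bool (i = k) * real (\<Sum>j\<in>UNIV. Z j i)) =
     (\<Sum>j\<in>UNIV. \<Sum>l\<in>UNIV. measure_pmf.expectation (remark_counts_pmf A x)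
       (\<lambda>Z. real (Z j i) * real (Z l k) - of_bool (j = l \<and> i = k) * real (Z j i)))"
    by (simp only: Bochner_Integration.integral_sum integrable_remark_counts_pmf)
  also have "\<dots> = (\<Sum>j\<in>UNIV. \<Sum>l\<in>UNIV. A i j * (real (x j) * real (x l) - of_bool (j = l) * real (x j)) * A k l)"
    unfolding expectation_remark_counts_pmf_pair by (simp only: mult_ac)
  finally show ?thesis .
qed

lemma expectation_remark_counts_pmf_fmgf:
  "measure_pmf.expectation (remark_counts_pmf A x) (\<lambda>Z. \<Prod>i\<in>UNIV. (1 + t i) ^ (\<Sum>j\<in>UNIV. Z j i)) =
     (\<Prod>j\<in>UNIV. (1 + (\<Sum>i\<in>UNIV. A i j * t i)) ^ x j)"
proof -
  have "(\<Prod>i\<in>UNIV. (1 + t i) ^ (\<Sum>j\<in>UNIV. Z j i)) = (\<Prod>j\<in>UNIV. \<Prod>i\<in>UNIV. (1 + t i) ^ Z j i)"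
    for Z :: "'d \<Rightarrow> 'c \<Rightarrow> nat"
    unfolding power_sum by (rule prod.swap)
  then have "measure_pmf.expectation (remark_counts_pmf A x) (\<lambda>Z. \<Prod>i\<in>UNIV. (1 + t i) ^ (\<Sum>j\<in>UNIV. Z j i)) =
      (\<Prod>j\<in>UNIV. measure_pmf.expectation (multi_pmf (x j) (\<lambda>i. A i j)) (\<lambda>z. \<Prod>i\<in>UNIV. (1 + t i) ^ z i))"
    unfolding remark_counts_pmf_def
    by (simp only:)
       (rule expectation_prod_Pi_pmf_integrable, auto intro: integrable_measure_pmf_finite finite_set_multi_pmf)
  also have "\<dots> = (\<Prod>j\<in>UNIV. (1 + (\<Sum>i\<in>UNIV. A i j * t i)) ^ x j)"
    by (simp only: expectation_multi_pmf_fmgf[of "\<lambda>i. A i _", OF A_nonneg A_col])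
  finally show ?thesis .
qed

end

lemma
  fixes g :: "('c::finite \<Rightarrow> nat) \<Rightarrow> real"
  assumes "\<And>y. 0 \<le> g y"
    and "integrable (measure_pmf X)
      (\<lambda>x. measure_pmf.expectation (remark_counts_pmf A x) (\<lambda>Z. g (\<lambda>i. \<Sum>j\<in>UNIV. Z j i)))"
  shows integrable_remark_pmf_nonneg: "integrable (remark_pmf A X) g"
  using assms by (simp add: remark_pmf_eq_bind_counts integrable_bind_pmf_nonneg_iff)

lemma expectation_remark_pmf:
  fixes f :: "('c::finite \<Rightarrow> nat) \<Rightarrow> real"
  assumes "integrable (remark_pmf A X) f"
  shows "measure_pmf.expectation (remark_pmf A X) f =
    measure_pmf.expectation X (\<lambda>x. measure_pmf.expectation (remark_counts_pmf A x) (\<lambda>Z. f (\<lambda>i. \<Sum>j\<in>UNIV. Z j i)))"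
  using assms unfolding remark_pmf_eq_bind_counts by (simp add: integral_bind_pmf_integrable)

context
  fixes A :: "'c::finite \<Rightarrow> 'd::finite \<Rightarrow> real" and X :: "('d \<Rightarrow> nat) pmf"
  assumes A_nonneg: "\<And>i j. 0 \<le> A i j" and A_col: "\<And>j. (\<Sum>i\<in>UNIV. A i j) \<le> 1"
begin

lemma mean_remark_pmf:
  assumes "\<And>j. integrable (measure_pmf X) (\<lambda>x. real (x j))"
  shows "mean_pmf (remark_pmf A X) i = (\<Sum>j\<in>UNIV. A i j * mean_pmf X j)"
proof -
  have integrable: "integrable (remark_pmf A X) (\<lambda>y. real (y i))"
  proof (rule integrable_remark_pmf_nonneg)
    show "integrable X (\<lambda>x. measure_pmf.expectation (remark_counts_pmf A x) (\<lambda>Z. real (\<Sum>j\<in>UNIV. Z j i)))"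
      unfolding expectation_remark_counts_pmf_total[OF A_nonneg A_col] using assms by simp
  qed simp
  show ?thesis
    unfolding mean_pmf_def expectation_remark_pmf[OF integrable]
      expectation_remark_counts_pmf_total[OF A_nonneg A_col]
    using assms by simp
qed

lemma square_integrable_remark_pmf:
  assumes square_integrable: "\<And>j. integrable (measure_pmf X) (\<lambda>x. (real (x j))\<^sup>2)"
  shows "integrable (remark_pmf A X) (\<lambda>y. (real (y i))\<^sup>2)"
proof (rule integrable_remark_pmf_nonneg)
  have "(real (\<Sum>j\<in>UNIV. Z j i))\<^sup>2 =
      (real (\<Sum>j\<in>UNIV. Z j i) * real (\<Sum>j\<in>UNIV. Z j i) - of_bool (i = i) * real (\<Sum>j\<in>UNIV. Z j i))
      + real (\<Sum>j\<in>UNIV. Z j i)" for Z :: "'d \<Rightarrow> 'c \<Rightarrow> nat"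
    by (simp add: power2_eq_square)
  then have "measure_pmf.expectation (remark_counts_pmf A x) (\<lambda>Z. (real (\<Sum>j\<in>UNIV. Z j i))\<^sup>2) =
      (\<Sum>j\<in>UNIV. \<Sum>l\<in>UNIV. A i j * (real (x j) * real (x l) - of_bool (j = l) * real (x j)) * A i l)
      + (\<Sum>j\<in>UNIV. A i j * real (x j))" for x
    by (simp only: Bochner_Integration.integral_add integrable_remark_counts_pmf
        expectation_remark_counts_pmf_factorial_moment2[OF A_nonneg A_col]
        expectation_remark_counts_pmf_total[OF A_nonneg A_col])
  then show "integrable X (\<lambda>x. measure_pmf.expectation (remark_counts_pmf A x) (\<lambda>Z. (real (\<Sum>j\<in>UNIV. Z j i))\<^sup>2))"
    using integrable_count_if_square_integrable[OF square_integrable]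
      integrable_count_mult_if_square_integrable[OF square_integrable]
    by simp
qed simp

lemma factorial_moment2_remark_pmf:
  assumes square_integrable: "\<And>j. integrable (measure_pmf X) (\<lambda>x. (real (x j))\<^sup>2)"
  shows "factorial_moment2_pmf (remark_pmf A X) i k =
    (\<Sum>j\<in>UNIV. \<Sum>l\<in>UNIV. A i j * factorial_moment2_pmf X j l * A k l)"
proof -
  note integrable_X = integrable_count_if_square_integrable[OF square_integrable]
    integrable_count_mult_if_square_integrable[OF square_integrable]
  note integrable_Y = integrable_count_if_square_integrable[OF square_integrable_remark_pmf[OF square_integrable]]
    integrable_count_mult_if_square_integrable[OF square_integrable_remark_pmf[OF square_integrable]]
  have integrable: "integrable (remark_pmf A X) (\<lambda>y. real (y i) * real (y k) - of_bool (i = k) * real (y i))"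
    using integrable_Y by simp
  have "factorial_moment2_pmf (remark_pmf A X) i k = measure_pmf.expectation X
      (\<lambda>x. \<Sum>j\<in>UNIV. \<Sum>l\<in>UNIV. A i j * (real (x j) * real (x l) - of_bool (j = l) * real (x j)) * A k l)"
    unfolding factorial_moment2_pmf_def expectation_remark_pmf[OF integrable]
    by (simp only: expectation_remark_counts_pmf_factorial_moment2[OF A_nonneg A_col])
  also have "\<dots> = (\<Sum>j\<in>UNIV. \<Sum>l\<in>UNIV. A i j * factorial_moment2_pmf X j l * A k l)"
    using integrable_X by (simp add: factorial_moment2_pmf_def)
  finally show ?thesis .
qed

lemma disp_remark_pmf:
  assumes square_integrable: "\<And>j. integrable (measure_pmf X) (\<lambda>x. (real (x j))\<^sup>2)"
  shows "disp_pmf (remark_pmf A X) i k = (\<Sum>j\<in>UNIV. \<Sum>l\<in>UNIV. A i j * disp_pmf X j l * A k l)"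
proof -
  have "disp_pmf (remark_pmf A X) i k =
      factorial_moment2_pmf (remark_pmf A X) i k - mean_pmf (remark_pmf A X) i * mean_pmf (remark_pmf A X) k"
    by (rule disp_pmf_eq_factorial_moment2[OF square_integrable_remark_pmf[OF square_integrable]])
  also have "\<dots> = (\<Sum>j\<in>UNIV. \<Sum>l\<in>UNIV. A i j * factorial_moment2_pmf X j l * A k l)
      - (\<Sum>j\<in>UNIV. A i j * mean_pmf X j) * (\<Sum>l\<in>UNIV. A k l * mean_pmf X l)"
    using integrable_count_if_square_integrable[OF square_integrable]
    by (simp add: factorial_moment2_remark_pmf[OF square_integrable] mean_remark_pmf)
  also have "\<dots> = (\<Sum>j\<in>UNIV. \<Sum>l\<in>UNIV. A i j * (factorial_moment2_pmf X j l - mean_pmf X j * mean_pmf X l) * A k l)"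
    by (simp add: sum_product sum_subtractf algebra_simps)
  also have "\<dots> = (\<Sum>j\<in>UNIV. \<Sum>l\<in>UNIV. A i j * disp_pmf X j l * A k l)"
    by (simp add: disp_pmf_eq_factorial_moment2[OF square_integrable])
  finally show ?thesis .
qed

lemma fmgf_remark_pmf:
  assumes "integrable (remark_pmf A X) (\<lambda>y. \<Prod>i\<in>UNIV. (1 + t i) ^ y i)"
  shows "fmgf_pmf (remark_pmf A X) t = fmgf_pmf X (\<lambda>j. \<Sum>i\<in>UNIV. A i j * t i)"
  unfolding fmgf_pmf_def expectation_remark_pmf[OF assms]
  by (simp only: expectation_remark_counts_pmf_fmgf[OF A_nonneg A_col])

end

theorem theorem3:
  fixes X :: "('d::finite \<Rightarrow> nat) pmf"
    and A :: "'c::finite \<Rightarrow> 'd \<Rightarrow> real"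
  assumes A_nonneg: "\<And>i j. 0 \<le> A i j"
    and A_le1: "\<And>i j. A i j \<le> 1"
    and A_col: "\<And>j. (\<Sum>i\<in>UNIV. A i j) \<le> 1"
  defines "Y \<equiv> remark_pmf A X"
  shows
    "((\<forall>j. integrable (measure_pmf X) (\<lambda>x. real (x j))) \<longrightarrow>
        (\<forall>i. mean_pmf Y i = (\<Sum>j\<in>UNIV. A i j * mean_pmf X j)))
   \<and> ((\<forall>j. integrable (measure_pmf X) (\<lambda>x. (real (x j))\<^sup>2)) \<longrightarrow>
        (\<forall>i k. disp_pmf Y i k =
           (\<Sum>j\<in>UNIV. \<Sum>l\<in>UNIV. A i j * disp_pmf X j l * A k l)))
   \<and> (\<forall>t :: 'c \<Rightarrow> real.
        integrable (measure_pmf X)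
          (\<lambda>x. \<Prod>j\<in>UNIV. (1 + (\<Sum>i\<in>UNIV. A i j * t i)) ^ (x j)) \<and>
        integrable (measure_pmf Y) (\<lambda>y. \<Prod>i\<in>UNIV. (1 + t i) ^ (y i)) \<longrightarrow>
        fmgf_pmf Y t = fmgf_pmf X (\<lambda>j. \<Sum>i\<in>UNIV. A i j * t i))"
proof (intro conjI allI impI)
  show "mean_pmf Y i = (\<Sum>j\<in>UNIV. A i j * mean_pmf X j)"
    if "\<forall>j. integrable (measure_pmf X) (\<lambda>x. real (x j))" for i
    using that unfolding Y_def by (intro mean_remark_pmf[OF A_nonneg A_col]) auto
  show "disp_pmf Y i k = (\<Sum>j\<in>UNIV. \<Sum>l\<in>UNIV. A i j * disp_pmf X j l * A k l)"
    if "\<forall>j. integrable (measure_pmf X) (\<lambda>x. (real (x j))\<^sup>2)" for i k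
    using that unfolding Y_def by (intro disp_remark_pmf[OF A_nonneg A_col]) auto
  show "fmgf_pmf Y t = fmgf_pmf X (\<lambda>j. \<Sum>i\<in>UNIV. A i j * t i)"
    if "integrable (measure_pmf X) (\<lambda>x. \<Prod>j\<in>UNIV. (1 + (\<Sum>i\<in>UNIV. A i j * t i)) ^ (x j)) \<and>
      integrable (measure_pmf Y) (\<lambda>y. \<Prod>i\<in>UNIV. (1 + t i) ^ (y i))" for t
    using that unfolding Y_def by (intro fmgf_remark_pmf[OF A_nonneg A_col]) auto
qed

end
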